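(* For every integer $k \ge 1$, \[ \pi = 2^{k+1}\, i \sum_{m=1}^{\infty} \frac{1}{2m-1}\left( \frac{1}{\left(1 + 2i\, a_k/\sqrt{2 - a_{k-1}}\right)^{2m-1}} - \frac{1}{\left(1 - 2i\, a_k/\sqrt{2 - a_{k-1}}\right)^{2m-1}} \right), \] where the series converges.
   Context: Here $i$ is the imaginary unit. The nested radicals $a_k$ are defined by $a_0 = 0$ and $a_k = \sqrt{2 + a_{k-1}}$ for $k \ge 1$. Thus $a_1 = \sqrt{2}$, and in general $a_k = \sqrt{2+\sqrt{2+\cdots+\sqrt{2}}}$ with $k$ square roots. *)

theory Defs
  imports "HOL-Analysis.Analysis"
begin

fun nested_rad :: "nat \<Rightarrow> real" where
  "nested_rad 0 = 0"
| "nested_rad (Suc k) = sqrt (2 + nested_rad k)"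

end

theory Submission
  imports Defs
begin

text \<open>
  Put \<open>t = pi / 2^(k+1)\<close>. The half-angle formulas give \<open>a k = 2 cos t\<close> and
  \<open>sqrt (2 - a (k - 1)) = 2 sin t\<close>, so \<open>x = cot t\<close>. The series is
  \<open>artanh u - artanh w\<close> for \<open>u = 1 / (1 + 2 i x)\<close> and \<open>w = 1 / (1 - 2 i x)\<close>, and
  \<open>artanh u = - Ln ((1 - u) / (1 + u)) / 2\<close>. For \<open>x = cot t\<close> these Cayley quotients are
  \<open>cos t * exp (i t)\<close> and \<open>cos t * exp (- i t)\<close>, whose logarithms differ by \<open>2 i t\<close>;
  hence the series sums to \<open>- i t\<close>, and \<open>2^(k+1) i (- i t) = pi\<close>.
\<close>

lemma pi_div_two_pow_bounds: "0 < pi / 2 ^ Suc (Suc k)" "pi / 2 ^ Suc (Suc k) < pi / 2"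
proof -
  have "1 < 2 * (2::real) ^ k"
    using one_le_power[of "2::real" k] by linarith
  then show "0 < pi / 2 ^ Suc (Suc k)" "pi / 2 ^ Suc (Suc k) < pi / 2"
    by (simp_all add: field_simps)
qed

lemma nested_rad_eq_cos: "nested_rad k = 2 * cos (pi / 2 ^ Suc k)"
proof (induction k)
  case (Suc k)
  define t where "t = pi / 2 ^ Suc (Suc k)"
  have "cos t > 0"
    using pi_div_two_pow_bounds[of k] by (intro cos_gt_zero) (simp_all add: t_def)
  have "nested_rad (Suc k) = sqrt (2 + 2 * cos (2 * t))"
    using Suc by (simp add: t_def)
  also have "2 + 2 * cos (2 * t) = (2 * cos t)\<^sup>2"
    by (simp add: cos_double_cos)
  also have "sqrt ((2 * cos t)\<^sup>2) = 2 * cos t"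
    using real_sqrt_abs[of "2 * cos t"] \<open>cos t > 0\<close> by simp
  finally show ?case by (simp add: t_def)
qed simp

lemma sqrt_two_minus_nested_rad: "sqrt (2 - nested_rad k) = 2 * sin (pi / 2 ^ Suc (Suc k))"
proof -
  define t where "t = pi / 2 ^ Suc (Suc k)"
  have "sin t > 0"
    using pi_div_two_pow_bounds[of k] pi_gt_zero unfolding t_def by (intro sin_gt_zero) linarith+
  have "2 - nested_rad k = 2 - 2 * cos (2 * t)"
    by (simp add: nested_rad_eq_cos t_def)
  also have "\<dots> = (2 * sin t)\<^sup>2"
    by (simp add: cos_double_sin)
  finally show ?thesis
    using real_sqrt_abs[of "2 * sin t"] \<open>sin t > 0\<close> by (simp add: t_def)
qed

lemma nested_rad_ratio_eq_cot:
  assumes "k \<ge> 1"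
  shows "nested_rad k / sqrt (2 - nested_rad (k - 1)) = cot (pi / 2 ^ Suc k)"
proof -
  obtain j where "k = Suc j"
    using assms by (cases k) auto
  then show ?thesis
    unfolding diff_Suc_1 sqrt_two_minus_nested_rad by (simp add: nested_rad_eq_cos cot_def)
qed

lemma odd_powers_sums_Ln:
  fixes u :: complex
  assumes "norm u < 1"
  shows "(\<lambda>n. u ^ (2 * n + 1) / of_nat (2 * n + 1)) sums (- Ln ((1 - u) / (1 + u)) / 2)"
proof -
  have "norm (- \<i> * u) < 1"
    using assms by (simp add: norm_mult)
  from sums_mult[OF Arctan_series(2)[OF this], of \<i>]
  have "(\<lambda>n. \<i> * ((-1) ^ n / of_nat (2 * n + 1) * (- \<i> * u) ^ (2 * n + 1)))
        sums (\<i> * Arctan (- \<i> * u))" .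
  moreover have "\<i> * ((-1) ^ n / of_nat (2 * n + 1) * (- \<i> * u) ^ (2 * n + 1))
                 = u ^ (2 * n + 1) / of_nat (2 * n + 1)" for n
  proof -
    have "(- \<i> * u) ^ (2 * n + 1) = - \<i> * u * (- (u\<^sup>2)) ^ n"
      by (simp add: power_add power_mult power_mult_distrib)
    also have "(- (u\<^sup>2)) ^ n = (-1) ^ n * u ^ (2 * n)"
      by (subst power_minus) (simp add: power_mult)
    finally have power_eq: "(- \<i> * u) ^ (2 * n + 1) = - \<i> * (-1) ^ n * u ^ (2 * n + 1)"
      by (simp add: power_add mult_ac)
    have "((-1)::complex) ^ n * (-1) ^ n = 1"
      by (simp flip: power_add)
    then show ?thesis
      unfolding power_eq by (simp add: field_simps)
  qed
  moreover have "\<i> * Arctan (- \<i> * u) = - Ln ((1 - u) / (1 + u)) / 2"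
    by (simp add: Arctan_def)
  ultimately show ?thesis by simp
qed

lemma norm_inverse_one_plus_imag_less:
  assumes "c \<noteq> 0"
  shows "norm (1 / (1 + 2 * \<i> * complex_of_real c)) < 1"
proof -
  have "norm (1 + 2 * \<i> * complex_of_real c) = sqrt (1 + 4 * c\<^sup>2)"
    by (simp add: cmod_def power2_eq_square)
  also have "1 < sqrt (1 + 4 * c\<^sup>2)"
    using assms by simp
  finally show ?thesis
    by (simp add: norm_divide divide_less_eq)
qed

lemma cot_cayley_eq_rcis:
  assumes "sin t \<noteq> 0"
  defines "u \<equiv> 1 / (1 + 2 * \<i> * complex_of_real (cot t))"
  shows "(1 - u) / (1 + u) = rcis (cos t) t"
proof -
  define c where "c = complex_of_real (cot t)"
  have "1 + 2 * \<i> * c \<noteq> 0" "2 + 2 * \<i> * c \<noteq> 0" "1 + \<i> * c \<noteq> 0"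
    by (simp_all add: c_def complex_eq_iff)
  then have "(1 - u) / (1 + u) = \<i> * c / (1 + \<i> * c)"
    by (simp add: u_def c_def[symmetric] divide_simps)
  also have "\<dots> = \<i> * cos t / (sin t + \<i> * cos t)"
    using assms(1) by (simp add: c_def cot_def field_simps)
  also have "sin t + \<i> * cos t = \<i> * cis (- t)"
    by (simp add: complex_eq_iff)
  also have "\<i> * cos t / (\<i> * cis (- t)) = rcis (cos t) t"
    by (simp add: rcis_def field_simps cis_mult)
  finally show ?thesis .
qed

lemma cot_odd_power_series_sums:
  assumes "0 < t" "t < pi / 2"
  defines "x \<equiv> complex_of_real (cot t)"
  shows "(\<lambda>n. let m = Suc n in
           (1 / of_nat (2 * m - 1)) *
           (1 / (1 + 2 * \<i> * x) ^ (2 * m - 1) - 1 / (1 - 2 * \<i> * x) ^ (2 * m - 1)))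
         sums (- \<i> * complex_of_real t)"
proof -
  define u where "u s = 1 / (1 + 2 * \<i> * complex_of_real (cot s))" for s
  \<comment> \<open>\<open>cot\<close> is odd, so the second power series is the one for \<open>u (- t)\<close>\<close>
  have "sin t > 0" "cos t > 0"
    using assms by (simp_all add: sin_gt_zero cos_gt_zero)
  have series: "(\<lambda>n. u s ^ (2 * n + 1) / of_nat (2 * n + 1)) sums (- Complex (ln (cos t)) s / 2)"
    if "s = t \<or> s = - t" for s
  proof -
    have "sin s \<noteq> 0" "cos s = cos t" "cot s \<noteq> 0" "s \<in> {-pi<..pi}"
      using that \<open>sin t > 0\<close> \<open>cos t > 0\<close> assms by (auto simp: cot_def)
    then show ?thesis
      using odd_powers_sums_Ln[OF norm_inverse_one_plus_imag_less[of "cot s"]]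
      by (simp add: u_def cot_cayley_eq_rcis Ln_rcis \<open>cos t > 0\<close>)
  qed
  have "(\<lambda>n. u t ^ (2 * n + 1) / of_nat (2 * n + 1) - u (- t) ^ (2 * n + 1) / of_nat (2 * n + 1))
        sums (- Complex (ln (cos t)) t / 2 - - Complex (ln (cos t)) (- t) / 2)"
    by (intro sums_diff series) simp_all
  also have "- Complex (ln (cos t)) t / 2 - - Complex (ln (cos t)) (- t) / 2 = - \<i> * complex_of_real t"
    by (simp add: complex_eq_iff)
  also have "(\<lambda>n. u t ^ (2 * n + 1) / of_nat (2 * n + 1) - u (- t) ^ (2 * n + 1) / of_nat (2 * n + 1))
    = (\<lambda>n. let m = Suc n in
           (1 / of_nat (2 * m - 1)) *
           (1 / (1 + 2 * \<i> * x) ^ (2 * m - 1) - 1 / (1 - 2 * \<i> * x) ^ (2 * m - 1)))"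
    by (simp add: u_def x_def power_one_over diff_divide_distrib)
  finally show ?thesis .
qed

theorem mainTheorem1:
  fixes k :: nat
  assumes "k \<ge> 1"
  defines "x \<equiv> complex_of_real (nested_rad k / sqrt (2 - nested_rad (k - 1)))"
  shows "\<exists>s. (\<lambda>n. let m = Suc n in
              (1 / of_nat (2 * m - 1)) *
              (1 / (1 + 2 * \<i> * x) ^ (2 * m - 1) - 1 / (1 - 2 * \<i> * x) ^ (2 * m - 1))) sums s
           \<and> complex_of_real pi = 2 ^ (k + 1) * \<i> * s"
proof -
  define t where "t = pi / 2 ^ Suc k"
  obtain j where "k = Suc j"
    using assms(1) by (cases k) auto
  then have "0 < t" "t < pi / 2"
    using pi_div_two_pow_bounds[of j] by (simp_all add: t_def)
  moreover have "x = complex_of_real (cot t)"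
    using nested_rad_ratio_eq_cot[OF assms(1)] by (simp add: x_def t_def)
  moreover have "complex_of_real pi = 2 ^ (k + 1) * \<i> * (- \<i> * complex_of_real t)"
    by (simp add: t_def)
  ultimately show ?thesis
    using cot_odd_power_series_sums by blast
qed

end
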